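(* Let $r\ge2$ and let $\mu_1,\dots,\mu_r$, $P_{\vec n}$, the nearest neighbor recurrence coefficients $a_{\vec n,j},b_{\vec n,j}$ and the marginal recurrence coefficients $a_n^2(\mu_i),b_n(\mu_i)$ be as in the context. Suppose that $b_{\vec n,i}\ne b_{\vec n,j}$ for all $\vec n\in\mathbb{N}^r$ and all $1\le i\ne j\le r$. Then the nearest neighbor recurrence coefficients $a_{\vec n,j},b_{\vec n,j}$ ($\vec n\in\mathbb{N}^r$, $1\le j\le r$) can be computed (recursively in $|\vec n|$) from the relations, valid for all $1\le i\ne j\le r$, \begin{align*} b_{\vec n+\vec e_i,j}-b_{\vec n,j} &= b_{\vec n+\vec e_j,i}-b_{\vec n,i},\\ \sum_{k=1}^r a_{\vec n+\vec e_j,k}-\sum_{k=1}^r a_{\vec n+\vec e_i,k} &= b_{\vec n+\vec e_j,i}\,b_{\vec n,j}-b_{\vec n,i}\,b_{\vec n+\vec e_i,j},\\ \frac{a_{\vec n+\vec e_j,i}}{a_{\vec n,i}} &= \frac{b_{\vec n,j}-b_{\vec n,i}}{b_{\vec n-\vec e_i,j}-b_{\vec n-\vec e_i,i}} \quad(\text{when } n_i\ge1), \end{align*} and the boundary conditions $a_{n\vec e_j,j}=a_n^2(\mu_j)$, $b_{n\vec e_j,j}=b_n(\mu_j)$ for $n\ge0$, $1\le j\le r$ (with $a_0^2(\mu_j)=0$), and $a_{n\vec e_i,j}=0$ for $n\ge0$, $i\ne j$; i.e. these relations and boundary conditions determine all nearest neighbor recurrence coefficients uniquely.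
   Context: Let $\mu_1,\dots,\mu_r$ be positive Borel measures on $\mathbb{R}$ with all moments finite, forming a normal system: for every multi-index $\vec n=(n_1,\dots,n_r)\in\mathbb{N}^r$ there is a unique monic polynomial $P_{\vec n}$ of degree $|\vec n|=n_1+\dots+n_r$ with $\int x^kP_{\vec n}(x)\,d\mu_j(x)=0$ for $0\le k\le n_j-1$, $1\le j\le r$. Set $P_{\vec n}=0$ if some component of $\vec n$ is negative; $\vec e_1,\dots,\vec e_r$ are the standard unit vectors. The nearest neighbor recurrence relations are \[ xP_{\vec n}(x)=P_{\vec n+\vec e_k}(x)+b_{\vec n,k}P_{\vec n}(x)+\sum_{j=1}^r a_{\vec n,j}P_{\vec n-\vec e_j}(x),\qquad 1\le k\le r, \] defining the real numbers $a_{\vec n,j},b_{\vec n,k}$, with the convention $a_{\vec n,j}=0$ whenever $n_j=0$ (such coefficients multiply the zero polynomial). For each $i$, $P_n(x;\mu_i)$ are the monic orthogonal polynomials for $\mu_i$, with $xP_n(x;\mu_i)=P_{n+1}(x;\mu_i)+b_n(\mu_i)P_n(x;\mu_i)+a_n^2(\mu_i)P_{n-1}(x;\mu_i)$, $P_0=1$, $P_{-1}=0$. The three displayed relations in the claim are known to hold for the nearest neighbor recurrence coefficients. *)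

theory Defs
  imports "HOL-Analysis.Analysis" "HOL-Computational_Algebra.Polynomial"
begin

text \<open>Multi-indices in N^r are functions nat => nat supported on {1..r}.\<close>

definition MI :: "nat \<Rightarrow> (nat \<Rightarrow> nat) set" where
  "MI r = {n. \<forall>k. k \<notin> {1..r} \<longrightarrow> n k = 0}"

definition unitv :: "nat \<Rightarrow> nat \<Rightarrow> nat" ("\<ee>") where
  "\<ee> k = (\<lambda>i. if i = k then 1 else 0)"

definition addv :: "(nat \<Rightarrow> nat) \<Rightarrow> (nat \<Rightarrow> nat) \<Rightarrow> (nat \<Rightarrow> nat)" where
  "addv n m = (\<lambda>i. n i + m i)"

definition scalev :: "nat \<Rightarrow> (nat \<Rightarrow> nat) \<Rightarrow> (nat \<Rightarrow> nat)" where
  "scalev c m = (\<lambda>i. c * m i)"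

text \<open>n - e_i (used only when n_i >= 1).\<close>
definition decv :: "(nat \<Rightarrow> nat) \<Rightarrow> nat \<Rightarrow> (nat \<Rightarrow> nat)" where
  "decv n i = n(i := n i - 1)"

definition absv :: "nat \<Rightarrow> (nat \<Rightarrow> nat) \<Rightarrow> nat" where
  "absv r n = (\<Sum>k\<in>{1..r}. n k)"

definition moment_measure :: "real measure \<Rightarrow> bool" where
  "moment_measure M \<longleftrightarrow> sets M = sets borel \<and> (\<forall>k::nat. integrable M (\<lambda>x. x ^ k))"

definition is_MOP :: "nat \<Rightarrow> (nat \<Rightarrow> real measure) \<Rightarrow> (nat \<Rightarrow> nat) \<Rightarrow> real poly \<Rightarrow> bool" where
  "is_MOP r \<mu> n p \<longleftrightarrow> lead_coeff p = 1 \<and> degree p = absv r n \<and>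
     (\<forall>j\<in>{1..r}. \<forall>k<n j. (\<integral>x. x ^ k * poly p x \<partial>\<mu> j) = 0)"

definition normal_system :: "nat \<Rightarrow> (nat \<Rightarrow> real measure) \<Rightarrow> bool" where
  "normal_system r \<mu> \<longleftrightarrow> (\<forall>n\<in>MI r. \<exists>!p. is_MOP r \<mu> n p)"

definition MOP :: "nat \<Rightarrow> (nat \<Rightarrow> real measure) \<Rightarrow> (nat \<Rightarrow> nat) \<Rightarrow> real poly" where
  "MOP r \<mu> n = (THE p. is_MOP r \<mu> n p)"

definition MOP_dec :: "nat \<Rightarrow> (nat \<Rightarrow> real measure) \<Rightarrow> (nat \<Rightarrow> nat) \<Rightarrow> nat \<Rightarrow> real poly" where
  "MOP_dec r \<mu> n j = (if n j = 0 then 0 else MOP r \<mu> (decv n j))"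

definition is_OP :: "real measure \<Rightarrow> nat \<Rightarrow> real poly \<Rightarrow> bool" where
  "is_OP M n p \<longleftrightarrow> lead_coeff p = 1 \<and> degree p = n \<and>
     (\<forall>k<n. (\<integral>x. x ^ k * poly p x \<partial>M) = 0)"

definition OP :: "real measure \<Rightarrow> nat \<Rightarrow> real poly" where
  "OP M n = (THE p. is_OP M n p)"

definition NN_rec :: "nat \<Rightarrow> (nat \<Rightarrow> real measure) \<Rightarrow> ((nat \<Rightarrow> nat) \<Rightarrow> nat \<Rightarrow> real)
    \<Rightarrow> ((nat \<Rightarrow> nat) \<Rightarrow> nat \<Rightarrow> real) \<Rightarrow> bool" where
  "NN_rec r \<mu> a b \<longleftrightarrow>
     (\<forall>n\<in>MI r. \<forall>j\<in>{1..r}. n j = 0 \<longrightarrow> a n j = 0) \<and>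
     (\<forall>n\<in>MI r. \<forall>k\<in>{1..r}. \<forall>x::real.
        x * poly (MOP r \<mu> n) x = poly (MOP r \<mu> (addv n (\<ee> k))) x + b n k * poly (MOP r \<mu> n) x
          + (\<Sum>j\<in>{1..r}. a n j * poly (MOP_dec r \<mu> n j) x))"

definition TT_rec :: "real measure \<Rightarrow> (nat \<Rightarrow> real) \<Rightarrow> (nat \<Rightarrow> real) \<Rightarrow> bool" where
  "TT_rec M a2 b \<longleftrightarrow> (\<forall>n. \<forall>x::real.
     x * poly (OP M n) x = poly (OP M (Suc n)) x + b n * poly (OP M n) x
       + a2 n * (if n = 0 then 0 else poly (OP M (n - 1)) x))"

definition relations_bc :: "nat \<Rightarrow> (nat \<Rightarrow> nat \<Rightarrow> real) \<Rightarrow> (nat \<Rightarrow> nat \<Rightarrow> real)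
    \<Rightarrow> ((nat \<Rightarrow> nat) \<Rightarrow> nat \<Rightarrow> real) \<Rightarrow> ((nat \<Rightarrow> nat) \<Rightarrow> nat \<Rightarrow> real) \<Rightarrow> bool" where
  "relations_bc r a2\<mu> b\<mu> a b \<longleftrightarrow>
     (\<forall>n\<in>MI r. \<forall>i\<in>{1..r}. \<forall>j\<in>{1..r}. i \<noteq> j \<longrightarrow>
        b (addv n (\<ee> i)) j - b n j = b (addv n (\<ee> j)) i - b n i \<and>
        (\<Sum>k\<in>{1..r}. a (addv n (\<ee> j)) k) - (\<Sum>k\<in>{1..r}. a (addv n (\<ee> i)) k)
          = b (addv n (\<ee> j)) i * b n j - b n i * b (addv n (\<ee> i)) j \<and>
        (1 \<le> n i \<longrightarrow> a (addv n (\<ee> j)) i / a n i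
          = (b n j - b n i) / (b (decv n i) j - b (decv n i) i))) \<and>
     (\<forall>m::nat. \<forall>j\<in>{1..r}.
        a (scalev m (\<ee> j)) j = (if m = 0 then 0 else a2\<mu> j m) \<and>
        b (scalev m (\<ee> j)) j = b\<mu> j m) \<and>
     (\<forall>m::nat. \<forall>i\<in>{1..r}. \<forall>j\<in>{1..r}. i \<noteq> j \<longrightarrow> a (scalev m (\<ee> i)) j = 0)"

end

theory Submission
  imports Defs
begin

text \<open>
  The nearest neighbor recurrence produces P_(n+e_i+e_j) both from x P_(n+e_i) and from
  x P_(n+e_j); comparing the coefficients of x^(|n|+1) and x^|n| gives the first two relations. Integrating the recurrence
  against x^(n_i) d\<mu>_i, a moment that normality keeps away from zero on P_n, gives the third.
  The boundary conditions are the three-term recurrences of the marginals, since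
  P_(m e_j) = P_m(x; \<mu>_j). Conversely, suppose two solutions of the relations agree below
  level |m|. Off the axes, m = n + e_j with n_k \<ge> 1 for some k \<noteq> j, and the third relation
  fixes a_(m,k) because its right-hand side is nonzero when the b_(n,i) are distinct. With the
  a known on level |m|, the first two relations are a linear system for b_(n+e_i,j) and
  b_(n+e_j,i) with determinant b_(n,j) - b_(n,i) \<noteq> 0.
\<close>

lemma addv_unitv_apply: "addv n (\<ee> k) i = n i + (if i = k then 1 else 0)"
  by (simp add: addv_def unitv_def)

lemma scalev_unitv_apply: "scalev s (\<ee> k) i = (if i = k then s else 0)"
  by (simp add: scalev_def unitv_def)

lemma decv_apply_other: "i \<noteq> j \<Longrightarrow> decv n i j = n j"
  by (simp add: decv_def)

lemma MI_addv: "n \<in> MI r \<Longrightarrow> k \<in> {1..r} \<Longrightarrow> addv n (\<ee> k) \<in> MI r"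
  by (auto simp: MI_def addv_unitv_apply)

lemma MI_decv: "n \<in> MI r \<Longrightarrow> decv n i \<in> MI r"
  by (auto simp: MI_def decv_def)

lemma MI_scalev: "k \<in> {1..r} \<Longrightarrow> scalev s (\<ee> k) \<in> MI r"
  by (auto simp: MI_def scalev_unitv_apply)

lemma addv_decv: "1 \<le> n i \<Longrightarrow> addv (decv n i) (\<ee> i) = n"
  by (auto simp: addv_def decv_def unitv_def)

lemma decv_addv_other: "i \<noteq> j \<Longrightarrow> decv (addv n (\<ee> j)) i = addv (decv n i) (\<ee> j)"
  by (auto simp: addv_def decv_def unitv_def)

lemma addv_unitv_commute: "addv (addv n (\<ee> i)) (\<ee> j) = addv (addv n (\<ee> j)) (\<ee> i)"
  by (auto simp: addv_def)

lemma absv_addv: "k \<in> {1..r} \<Longrightarrow> absv r (addv n (\<ee> k)) = absv r n + 1"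
  by (simp add: absv_def addv_unitv_apply sum.distrib)

lemma absv_decv: "1 \<le> n i \<Longrightarrow> i \<in> {1..r} \<Longrightarrow> absv r n = absv r (decv n i) + 1"
  by (metis absv_addv addv_decv)

lemma absv_scalev: "k \<in> {1..r} \<Longrightarrow> absv r (scalev s (\<ee> k)) = s"
  by (simp add: absv_def scalev_unitv_apply)

lemma MI_axis_or_step:
  assumes "m \<in> MI r" "k \<in> {1..r}"
  obtains "m = scalev (m k) (\<ee> k)"
  | j where "j \<in> {1..r}" "j \<noteq> k" "1 \<le> m j"
proof (cases "\<forall>j\<in>{1..r}. j \<noteq> k \<longrightarrow> m j = 0")
  case True
  then have "m = scalev (m k) (\<ee> k)"
    using assms(1) by (intro ext) (auto simp: scalev_unitv_apply MI_def)
  then show ?thesis by (rule that(1))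
next
  case False
  then show ?thesis using that(2) by auto
qed

section \<open>Uniqueness of solutions of the relations\<close>

lemma relations_bcD:
  assumes "relations_bc r a2 b2 a b" "n \<in> MI r" "i \<in> {1..r}" "j \<in> {1..r}" "i \<noteq> j"
  shows "b (addv n (\<ee> i)) j - b n j = b (addv n (\<ee> j)) i - b n i"
    and "(\<Sum>k\<in>{1..r}. a (addv n (\<ee> j)) k) - (\<Sum>k\<in>{1..r}. a (addv n (\<ee> i)) k)
          = b (addv n (\<ee> j)) i * b n j - b n i * b (addv n (\<ee> i)) j"
    and "1 \<le> n i \<Longrightarrow> a (addv n (\<ee> j)) i / a n i
          = (b n j - b n i) / (b (decv n i) j - b (decv n i) i)"
  using assms unfolding relations_bc_def by blast+

lemma relations_bc_axisD:
  assumes "relations_bc r a2 b2 a b" "j \<in> {1..r}"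
  shows "a (scalev m (\<ee> j)) j = (if m = 0 then 0 else a2 j m)"
    and "b (scalev m (\<ee> j)) j = b2 j m"
  using assms unfolding relations_bc_def by blast+

context
  fixes r :: nat and a2 b2 :: "nat \<Rightarrow> nat \<Rightarrow> real"
    and a b a' b' :: "(nat \<Rightarrow> nat) \<Rightarrow> nat \<Rightarrow> real"
  assumes rel: "relations_bc r a2 b2 a b" and rel': "relations_bc r a2 b2 a' b'"
    and b_distinct: "\<forall>n\<in>MI r. \<forall>i\<in>{1..r}. \<forall>j\<in>{1..r}. i \<noteq> j \<longrightarrow> b n i \<noteq> b n j"
begin

lemma relations_bc_unique_a_level:
  assumes conv: "\<forall>n\<in>MI r. \<forall>j\<in>{1..r}. n j = 0 \<longrightarrow> a n j = 0"
    and conv': "\<forall>n\<in>MI r. \<forall>j\<in>{1..r}. n j = 0 \<longrightarrow> a' n j = 0"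
    and below: "\<And>n j. n \<in> MI r \<Longrightarrow> absv r n < absv r m \<Longrightarrow> j \<in> {1..r} \<Longrightarrow>
                  a' n j = a n j \<and> b' n j = b n j"
    and m: "m \<in> MI r" and k: "k \<in> {1..r}"
  shows "a' m k = a m k"
proof (cases "m k = 0")
  case True
  then show ?thesis using conv conv' m k by auto
next
  case mk: False
  from m k show ?thesis
  proof (cases rule: MI_axis_or_step)
    case 1
    then show ?thesis using relations_bc_axisD(1)[OF rel k] relations_bc_axisD(1)[OF rel' k] by metis
  next
    case (2 j)
    define n where "n = decv m j"
    define d where "d = decv n k"
    have mn: "m = addv n (\<ee> j)" using 2 addv_decv n_def by metis
    have n: "n \<in> MI r" "absv r n < absv r m"
      using MI_decv[OF m] absv_addv[OF 2(1), of n] mn unfolding n_def by auto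
    have nk: "1 \<le> n k" using mk 2 n_def decv_apply_other[of j k] by simp
    have d: "d \<in> MI r" "absv r d < absv r m" using MI_decv n absv_decv[of n k r] nk k d_def by auto
    have ratio: "a m k / a n k = (b n j - b n k) / (b d j - b d k)"
      using relations_bcD(3)[OF rel n(1) k 2(1)] 2 nk mn d_def by auto
    have ratio': "a' m k / a' n k = (b' n j - b' n k) / (b' d j - b' d k)"
      using relations_bcD(3)[OF rel' n(1) k 2(1)] 2 nk mn d_def by auto
    have "(b n j - b n k) / (b d j - b d k) \<noteq> 0"
      using b_distinct n d k 2 by auto
    then have "a n k \<noteq> 0" using ratio by auto
    moreover have "a' m k / a n k = a m k / a n k"
      using ratio ratio' below[OF n] below[OF d] k 2(1) by simp
    ultimately show ?thesis by simp
  qed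
qed

lemma relations_bc_unique_b_level:
  assumes below: "\<And>n j. n \<in> MI r \<Longrightarrow> absv r n < absv r m \<Longrightarrow> j \<in> {1..r} \<Longrightarrow>
                  a' n j = a n j \<and> b' n j = b n j"
    and level: "\<And>n j. n \<in> MI r \<Longrightarrow> absv r n = absv r m \<Longrightarrow> j \<in> {1..r} \<Longrightarrow> a' n j = a n j"
    and m: "m \<in> MI r" and j: "j \<in> {1..r}"
  shows "b' m j = b m j"
  using m j
proof (cases rule: MI_axis_or_step)
  case 1
  then show ?thesis using relations_bc_axisD(2)[OF rel j] relations_bc_axisD(2)[OF rel' j] by metis
next
  case (2 i)
  define n where "n = decv m i"
  have mn: "m = addv n (\<ee> i)" using 2 addv_decv n_def by metis
  have n: "n \<in> MI r" "absv r n < absv r m"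
    using MI_decv[OF m] absv_addv[OF 2(1), of n] mn unfolding n_def by auto
  have nj: "addv n (\<ee> j) \<in> MI r" "absv r (addv n (\<ee> j)) = absv r m"
    using MI_addv[OF n(1) j] absv_addv 2(1) j mn by auto
  have bn: "b' n j = b n j" "b' n i = b n i" using below[OF n] 2(1) j by auto
  have sums: "(\<Sum>k\<in>{1..r}. a' (addv n (\<ee> j)) k) = (\<Sum>k\<in>{1..r}. a (addv n (\<ee> j)) k)"
    "(\<Sum>k\<in>{1..r}. a' m k) = (\<Sum>k\<in>{1..r}. a m k)"
    using level[OF nj] level[OF m] by simp_all
  define X where "X = b (addv n (\<ee> j)) i"
  define X' where "X' = b' (addv n (\<ee> j)) i"
  have Y: "b m j = X + (b n j - b n i)"
    using relations_bcD(1)[OF rel n(1) 2(1) j 2(2)] mn X_def by simp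
  have Y': "b' m j = X' + (b n j - b n i)"
    using relations_bcD(1)[OF rel' n(1) 2(1) j 2(2)] mn X'_def bn by simp
  have "X * b n j - b n i * b m j = X' * b n j - b n i * b' m j"
    using relations_bcD(2)[OF rel n(1) 2(1) j 2(2)] relations_bcD(2)[OF rel' n(1) 2(1) j 2(2)]
      mn X_def X'_def bn sums by simp
  then have "(X - X') * (b n j - b n i) = 0"
    unfolding Y Y' by algebra
  moreover have "b n j \<noteq> b n i" using b_distinct n(1) 2 j by auto
  ultimately show ?thesis using Y Y' by simp
qed

lemma relations_bc_unique:
  assumes conv: "\<forall>n\<in>MI r. \<forall>j\<in>{1..r}. n j = 0 \<longrightarrow> a n j = 0"
    and conv': "\<forall>n\<in>MI r. \<forall>j\<in>{1..r}. n j = 0 \<longrightarrow> a' n j = 0"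
    and m: "m \<in> MI r" and j: "j \<in> {1..r}"
  shows "a' m j = a m j \<and> b' m j = b m j"
  using m j
proof (induction "absv r m" arbitrary: m j rule: less_induct)
  case less
  have below: "\<And>n j. n \<in> MI r \<Longrightarrow> absv r n < absv r m \<Longrightarrow> j \<in> {1..r} \<Longrightarrow>
                 a' n j = a n j \<and> b' n j = b n j"
    using less.hyps by blast
  have level: "a' n k = a n k" if "n \<in> MI r" "absv r n = absv r m" "k \<in> {1..r}" for n k
    using relations_bc_unique_a_level[OF conv conv' _ that(1,3)] below that(2) by metis
  show ?case
    using level[OF less.prems(1) refl less.prems(2)]
      relations_bc_unique_b_level[OF below level less.prems] by blast
qed

end

definition poly_moment :: "real measure \<Rightarrow> nat \<Rightarrow> real poly \<Rightarrow> real" where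
  "poly_moment M k p = (\<integral>x. x ^ k * poly p x \<partial>M)"

lemma integrable_poly_moment:
  assumes "moment_measure M"
  shows "integrable M (\<lambda>x. x ^ k * poly p x)"
proof -
  have "(\<lambda>x. x ^ k * poly p x) = (\<lambda>x. \<Sum>i\<le>degree p. coeff p i * x ^ (k + i))"
    by (rule ext) (simp add: poly_altdef sum_distrib_left power_add algebra_simps)
  then show ?thesis
    using assms by (auto simp: moment_measure_def intro!: integrable_sum integrable_mult_right)
qed

lemma poly_moment_add:
  "moment_measure M \<Longrightarrow> poly_moment M k (p + q) = poly_moment M k p + poly_moment M k q"
  unfolding poly_moment_def by (simp add: distrib_left integrable_poly_moment)

lemma poly_moment_smult: "poly_moment M k (smult c p) = c * poly_moment M k p"
  unfolding poly_moment_def by (simp add: algebra_simps)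

lemma poly_moment_sum:
  "moment_measure M \<Longrightarrow> poly_moment M k (\<Sum>l\<in>A. f l) = (\<Sum>l\<in>A. poly_moment M k (f l))"
  unfolding poly_moment_def by (simp add: poly_sum sum_distrib_left integrable_poly_moment)

lemma poly_moment_pCons_0: "poly_moment M k (pCons 0 p) = poly_moment M (Suc k) p"
  unfolding poly_moment_def by (simp add: algebra_simps)

lemma poly_ext:
  fixes p q :: "'a :: {idom, ring_char_0} poly"
  shows "(\<And>x. poly p x = poly q x) \<Longrightarrow> p = q"
  by (metis ext poly_eq_poly_eq_iff)

lemma smult_combination_eq_0:
  fixes p q :: "'a :: idom poly"
  assumes "smult c p + smult d q = 0" "coeff q (degree p) = 0"
  shows "c * lead_coeff p = 0" "smult d q = 0"
proof -
  have "coeff (smult c p + smult d q) (degree p) = c * lead_coeff p"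
    using assms(2) by simp
  then show "c * lead_coeff p = 0" using assms(1) by simp
  then show "smult d q = 0" using assms(1) by (auto simp: smult_eq_0_iff)
qed

lemma TT_rec_poly:
  assumes "TT_rec M A B"
  shows "pCons 0 (OP M s) = OP M (Suc s) + smult (B s) (OP M s)
           + smult (A s) (if s = 0 then 0 else OP M (s - 1))"
  using assms unfolding TT_rec_def by (intro poly_ext) simp

section \<open>Nearest neighbor recurrence coefficients\<close>

locale NN_system =
  fixes r :: nat and \<mu> :: "nat \<Rightarrow> real measure" and a b :: "(nat \<Rightarrow> nat) \<Rightarrow> nat \<Rightarrow> real"
  assumes moment_measure: "\<And>i. i \<in> {1..r} \<Longrightarrow> moment_measure (\<mu> i)"
    and normal: "normal_system r \<mu>"
    and recurrence: "NN_rec r \<mu> a b"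
begin

abbreviation P :: "(nat \<Rightarrow> nat) \<Rightarrow> real poly" where
  "P \<equiv> MOP r \<mu>"

definition nn_tail :: "(nat \<Rightarrow> nat) \<Rightarrow> real poly" where
  "nn_tail n = (\<Sum>j\<in>{1..r}. smult (a n j) (MOP_dec r \<mu> n j))"

lemma is_MOP_MOP: "n \<in> MI r \<Longrightarrow> is_MOP r \<mu> n (P n)"
  using normal unfolding normal_system_def MOP_def by (metis theI')

lemma MOP_unique: "n \<in> MI r \<Longrightarrow> is_MOP r \<mu> n p \<Longrightarrow> p = P n"
  using normal is_MOP_MOP unfolding normal_system_def by blast

lemma degree_MOP: "n \<in> MI r \<Longrightarrow> degree (P n) = absv r n"
  using is_MOP_MOP unfolding is_MOP_def by blast

lemma lead_coeff_MOP: "n \<in> MI r \<Longrightarrow> lead_coeff (P n) = 1"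
  using is_MOP_MOP unfolding is_MOP_def by blast

lemma coeff_MOP_absv: "n \<in> MI r \<Longrightarrow> coeff (P n) (absv r n) = 1"
  using degree_MOP lead_coeff_MOP by metis

lemma MOP_nonzero: "n \<in> MI r \<Longrightarrow> P n \<noteq> 0"
  using lead_coeff_MOP by fastforce

lemma poly_moment_MOP:
  "n \<in> MI r \<Longrightarrow> l \<in> {1..r} \<Longrightarrow> k < n l \<Longrightarrow> poly_moment (\<mu> l) k (P n) = 0"
  using is_MOP_MOP unfolding is_MOP_def poly_moment_def by blast

lemma a_eq_0: "n \<in> MI r \<Longrightarrow> j \<in> {1..r} \<Longrightarrow> n j = 0 \<Longrightarrow> a n j = 0"
  using recurrence unfolding NN_rec_def by blast

lemma NN_rec_poly:
  "n \<in> MI r \<Longrightarrow> k \<in> {1..r} \<Longrightarrow>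
     pCons 0 (P n) = P (addv n (\<ee> k)) + smult (b n k) (P n) + nn_tail n"
  using recurrence unfolding NN_rec_def nn_tail_def by (intro poly_ext) (simp add: poly_sum)

lemma MOP_addv_diff:
  assumes "n \<in> MI r" "i \<in> {1..r}" "j \<in> {1..r}"
  shows "P (addv n (\<ee> j)) = P (addv n (\<ee> i)) + smult (b n i - b n j) (P n)"
proof -
  have "P (addv n (\<ee> j)) + smult (b n j) (P n) = P (addv n (\<ee> i)) + smult (b n i) (P n)"
    using NN_rec_poly[OF assms(1,2)] NN_rec_poly[OF assms(1,3)] by simp
  then show ?thesis by (simp add: algebra_simps smult_diff_left)
qed

lemma coeff_MOP_dec:
  assumes n: "n \<in> MI r" and l: "l \<in> {1..r}"
  shows "coeff (MOP_dec r \<mu> n l) (absv r n) = 0"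
    and "coeff (MOP_dec r \<mu> n l) (absv r n - 1) = (if n l = 0 then 0 else 1)"
proof -
  have "n l \<noteq> 0 \<Longrightarrow> absv r n = absv r (decv n l) + 1"
    using absv_decv[of n l r] l by simp
  then show "coeff (MOP_dec r \<mu> n l) (absv r n) = 0"
    and "coeff (MOP_dec r \<mu> n l) (absv r n - 1) = (if n l = 0 then 0 else 1)"
    using MI_decv[OF n] degree_MOP coeff_MOP_absv by (auto simp: MOP_dec_def coeff_eq_0)
qed

lemma coeff_nn_tail:
  assumes n: "n \<in> MI r"
  shows "coeff (nn_tail n) (absv r n) = 0"
    and "coeff (nn_tail n) (absv r n - 1) = (\<Sum>j\<in>{1..r}. a n j)"
proof -
  show "coeff (nn_tail n) (absv r n) = 0"
    unfolding nn_tail_def coeff_sum using coeff_MOP_dec(1)[OF n] by simp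
  show "coeff (nn_tail n) (absv r n - 1) = (\<Sum>j\<in>{1..r}. a n j)"
    unfolding nn_tail_def coeff_sum using coeff_MOP_dec(2)[OF n] a_eq_0[OF n]
    by (intro sum.cong) auto
qed

text \<open>coeff (pCons 0 (P n)) |n| is the subleading coefficient of P_n (0 for n = 0); it drops
  by b_(n,k) along the step from n to n + e_k.\<close>

lemma coeff_MOP_addv_subleading:
  assumes n: "n \<in> MI r" and k: "k \<in> {1..r}"
  shows "coeff (P (addv n (\<ee> k))) (absv r n) = coeff (pCons 0 (P n)) (absv r n) - b n k"
  using arg_cong[OF NN_rec_poly[OF n k], of "\<lambda>p. coeff p (absv r n)"]
    coeff_MOP_absv[OF n] coeff_nn_tail(1)[OF n] by simp

lemma NN_relation_b:
  assumes n: "n \<in> MI r" and i: "i \<in> {1..r}" and j: "j \<in> {1..r}"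
  shows "b (addv n (\<ee> i)) j - b n j = b (addv n (\<ee> j)) i - b n i"
proof -
  have sub2: "coeff (P (addv (addv n (\<ee> k)) (\<ee> l))) (Suc (absv r n))
      = coeff (pCons 0 (P n)) (absv r n) - b n k - b (addv n (\<ee> k)) l"
    if k: "k \<in> {1..r}" and l: "l \<in> {1..r}" for k l
    using coeff_MOP_addv_subleading[OF MI_addv[OF n k] l] coeff_MOP_addv_subleading[OF n k]
      absv_addv[OF k] by simp
  show ?thesis
    using sub2[OF i j] sub2[OF j i] by (simp add: addv_unitv_commute)
qed

lemma NN_relation_a_sum:
  assumes n: "n \<in> MI r" and i: "i \<in> {1..r}" and j: "j \<in> {1..r}"
  shows "(\<Sum>k\<in>{1..r}. a (addv n (\<ee> j)) k) - (\<Sum>k\<in>{1..r}. a (addv n (\<ee> i)) k)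
          = b (addv n (\<ee> j)) i * b n j - b n i * b (addv n (\<ee> i)) j"
proof -
  define N where "N = absv r n"
  define ni where "ni = addv n (\<ee> i)"
  define nj where "nj = addv n (\<ee> j)"
  define Q where "Q = P (addv ni (\<ee> j))"
  define q where "q = coeff (pCons 0 (P n)) N"
  have ni: "ni \<in> MI r" "absv r ni - 1 = N" using MI_addv n i absv_addv i N_def ni_def by auto
  have nj: "nj \<in> MI r" "absv r nj - 1 = N" using MI_addv n j absv_addv j N_def nj_def by auto
  have "pCons 0 (P nj) = pCons 0 (P ni) + smult (b n i - b n j) (pCons 0 (P n))"
    using MOP_addv_diff[OF n i j] ni_def nj_def by simp
  then have split: "coeff (pCons 0 (P nj)) N = coeff (pCons 0 (P ni)) N + (b n i - b n j) * q"
    unfolding q_def by (metis coeff_add coeff_smult)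
  have step_j: "coeff (pCons 0 (P nj)) N
      = coeff Q N + b nj i * coeff (P nj) N + (\<Sum>k\<in>{1..r}. a nj k)"
    using arg_cong[OF NN_rec_poly[OF nj(1) i], of "\<lambda>p. coeff p N"] coeff_nn_tail(2)[OF nj(1)] nj(2)
    unfolding Q_def ni_def nj_def by (simp add: addv_unitv_commute)
  have step_i: "coeff (pCons 0 (P ni)) N
      = coeff Q N + b ni j * coeff (P ni) N + (\<Sum>k\<in>{1..r}. a ni k)"
    using arg_cong[OF NN_rec_poly[OF ni(1) j], of "\<lambda>p. coeff p N"] coeff_nn_tail(2)[OF ni(1)] ni(2)
    unfolding Q_def by simp
  have "coeff (P nj) N = q - b n j" "coeff (P ni) N = q - b n i"
    using coeff_MOP_addv_subleading[OF n] i j unfolding q_def N_def ni_def nj_def by auto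
  moreover have "b ni j - b n j = b nj i - b n i"
    using NN_relation_b[OF n i j] ni_def nj_def by simp
  ultimately show ?thesis
    using split step_i step_j unfolding ni_def[symmetric] nj_def[symmetric] by algebra
qed

text \<open>If the moment vanished, P_n + P_(n+e_i) would be a second multiple orthogonal polynomial
  of index n + e_i.\<close>

lemma poly_moment_MOP_nonzero:
  assumes n: "n \<in> MI r" and i: "i \<in> {1..r}"
  shows "poly_moment (\<mu> i) (n i) (P n) \<noteq> 0"
proof
  assume vanish: "poly_moment (\<mu> i) (n i) (P n) = 0"
  define ni where "ni = addv n (\<ee> i)"
  have ni: "ni \<in> MI r" using MI_addv n i ni_def by auto
  have deg: "degree (P n) < degree (P ni)"
    using degree_MOP[OF n] degree_MOP[OF ni] absv_addv[OF i] ni_def by simp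
  have "is_MOP r \<mu> ni (P n + P ni)"
    unfolding is_MOP_def
  proof (intro conjI ballI allI impI)
    show "lead_coeff (P n + P ni) = 1" using lead_coeff_add_le[OF deg] lead_coeff_MOP[OF ni] by simp
    show "degree (P n + P ni) = absv r ni" using degree_add_eq_right[OF deg] degree_MOP[OF ni] by simp
    fix l k assume l: "l \<in> {1..r}" and k: "k < ni l"
    have "poly_moment (\<mu> l) k (P n) = 0"
    proof (cases "l = i \<and> k = n i")
      case False
      then have "k < n l" using k unfolding ni_def addv_unitv_apply by (auto split: if_splits)
      then show ?thesis using poly_moment_MOP[OF n l] by simp
    qed (use vanish in simp)
    then show "(\<integral>x. x ^ k * poly (P n + P ni) x \<partial>\<mu> l) = 0"
      using poly_moment_add[OF moment_measure[OF l]] poly_moment_MOP[OF ni l k]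
      unfolding poly_moment_def by simp
  qed
  then have "P n + P ni = P ni" using MOP_unique[OF ni] by blast
  then show False using MOP_nonzero[OF n] by simp
qed

lemma poly_moment_MOP_rec:
  assumes n: "n \<in> MI r" and i: "i \<in> {1..r}" and ni: "1 \<le> n i"
  shows "poly_moment (\<mu> i) (n i) (P n) = a n i * poly_moment (\<mu> i) (n i - 1) (P (decv n i))"
proof -
  let ?J = "poly_moment (\<mu> i) (n i - 1)"
  have M: "moment_measure (\<mu> i)" using moment_measure[OF i] .
  have tail: "a n l * ?J (MOP_dec r \<mu> n l) = (if l = i then a n i * ?J (P (decv n i)) else 0)"
    if l: "l \<in> {1..r}" for l
  proof -
    have "l \<noteq> i \<Longrightarrow> n l \<noteq> 0 \<Longrightarrow> ?J (P (decv n l)) = 0"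
      using poly_moment_MOP[OF MI_decv[OF n] i] ni by (simp add: decv_apply_other)
    then show ?thesis using ni by (auto simp: MOP_dec_def poly_moment_def)
  qed
  have vanish: "?J (P (addv n (\<ee> i))) = 0" "?J (P n) = 0"
    using poly_moment_MOP[OF MI_addv[OF n i] i] poly_moment_MOP[OF n i] ni
    by (simp_all add: addv_unitv_apply)
  have "poly_moment (\<mu> i) (n i) (P n) = ?J (pCons 0 (P n))"
    using ni by (simp add: poly_moment_pCons_0)
  also have "\<dots> = ?J (P (addv n (\<ee> i))) + b n i * ?J (P n)
       + (\<Sum>l\<in>{1..r}. a n l * ?J (MOP_dec r \<mu> n l))"
    unfolding NN_rec_poly[OF n i] nn_tail_def
    by (simp add: poly_moment_add[OF M] poly_moment_sum[OF M] poly_moment_smult)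
  also have "\<dots> = (\<Sum>l\<in>{1..r}. a n l * ?J (MOP_dec r \<mu> n l))"
    unfolding vanish by simp
  also have "\<dots> = (\<Sum>l\<in>{1..r}. if l = i then a n i * ?J (P (decv n i)) else 0)"
    using tail by (rule sum.cong[OF refl])
  also have "\<dots> = a n i * ?J (P (decv n i))"
    using i by simp
  finally show ?thesis .
qed

lemma poly_moment_MOP_addv:
  assumes n: "n \<in> MI r" and i: "i \<in> {1..r}" and j: "j \<in> {1..r}"
  shows "poly_moment (\<mu> i) (n i) (P (addv n (\<ee> j))) = (b n i - b n j) * poly_moment (\<mu> i) (n i) (P n)"
  using poly_moment_MOP[OF MI_addv[OF n i] i]
  unfolding MOP_addv_diff[OF n i j]
  by (simp add: poly_moment_add[OF moment_measure[OF i]] poly_moment_smult addv_unitv_apply)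

lemma NN_relation_a_ratio:
  assumes n: "n \<in> MI r" and i: "i \<in> {1..r}" and j: "j \<in> {1..r}" and ij: "i \<noteq> j"
    and ni: "1 \<le> n i"
  shows "a (addv n (\<ee> j)) i / a n i = (b n j - b n i) / (b (decv n i) j - b (decv n i) i)"
proof -
  define m where "m = decv n i"
  define nj where "nj = addv n (\<ee> j)"
  have m: "m \<in> MI r" "m i = n i - 1" using MI_decv n m_def by (auto simp: decv_def)
  have nj: "nj \<in> MI r" "nj i = n i" "decv nj i = addv m (\<ee> j)"
    using MI_addv n j nj_def ij m_def decv_addv_other by (auto simp: addv_unitv_apply)
  have mj: "addv m (\<ee> j) \<in> MI r" "addv m (\<ee> j) i = m i"
    using MI_addv[OF m(1) j] ij by (auto simp: addv_unitv_apply)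
  define In where "In = poly_moment (\<mu> i) (n i) (P n)"
  define Im where "Im = poly_moment (\<mu> i) (n i - 1) (P m)"
  define Imj where "Imj = poly_moment (\<mu> i) (n i - 1) (P (addv m (\<ee> j)))"
  have nonzero: "In \<noteq> 0" "Im \<noteq> 0" "Imj \<noteq> 0"
    using poly_moment_MOP_nonzero[OF n i] poly_moment_MOP_nonzero[OF m(1) i]
      poly_moment_MOP_nonzero[OF mj(1) i] m(2) mj(2) In_def Im_def Imj_def by auto
  have "In = a n i * Im" using poly_moment_MOP_rec[OF n i ni] In_def Im_def m_def by simp
  then have a_n: "a n i = In / Im" using nonzero by simp
  have "poly_moment (\<mu> i) (n i) (P nj) = a nj i * Imj"
    using poly_moment_MOP_rec[OF nj(1) i] nj ni Imj_def by simp
  moreover have "poly_moment (\<mu> i) (n i) (P nj) = (b n i - b n j) * In"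
    using poly_moment_MOP_addv[OF n i j] nj_def In_def by simp
  ultimately have a_nj: "a nj i = (b n i - b n j) * In / Imj"
    using nonzero by (simp add: field_simps)
  have Imj: "Imj = (b m i - b m j) * Im"
    using poly_moment_MOP_addv[OF m(1) i j] Imj_def Im_def m(2) by simp
  then have "b m i - b m j \<noteq> 0" using nonzero by auto
  then have "a nj i / a n i = (b n i - b n j) / (b m i - b m j)"
    unfolding a_n a_nj Imj using nonzero by (simp add: field_simps)
  also have "\<dots> = (b n j - b n i) / (b m j - b m i)"
    by (metis minus_diff_eq minus_divide_divide)
  finally show ?thesis using nj_def m_def by simp
qed

lemma OP_eq_MOP_axis:
  assumes j: "j \<in> {1..r}"
  shows "OP (\<mu> j) s = P (scalev s (\<ee> j))"
proof -
  have "is_OP (\<mu> j) s = is_MOP r \<mu> (scalev s (\<ee> j))"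
    using j by (intro ext) (auto simp: is_OP_def is_MOP_def absv_scalev scalev_unitv_apply)
  then show ?thesis unfolding OP_def MOP_def by simp
qed

lemma nn_tail_axis:
  assumes j: "j \<in> {1..r}"
  shows "nn_tail (scalev s (\<ee> j))
           = smult (a (scalev s (\<ee> j)) j) (if s = 0 then 0 else OP (\<mu> j) (s - 1))"
proof -
  have "s \<noteq> 0 \<Longrightarrow> decv (scalev s (\<ee> j)) j = scalev (s - 1) (\<ee> j)"
    by (intro ext) (simp add: decv_def scalev_unitv_apply)
  then have "MOP_dec r \<mu> (scalev s (\<ee> j)) l
      = (if l = j then (if s = 0 then 0 else OP (\<mu> j) (s - 1)) else 0)" for l
    using OP_eq_MOP_axis[OF j] by (simp add: MOP_dec_def scalev_unitv_apply)
  then show ?thesis using j by (simp add: nn_tail_def if_distrib cong: if_cong)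
qed

lemma NN_boundary:
  assumes j: "j \<in> {1..r}" and tt: "TT_rec (\<mu> j) A B"
  shows "b (scalev s (\<ee> j)) j = B s"
    and "a (scalev s (\<ee> j)) j = (if s = 0 then 0 else A s)"
proof -
  define n where "n = scalev s (\<ee> j)"
  define R where "R = (if s = 0 then 0 else OP (\<mu> j) (s - 1))"
  have n: "n \<in> MI r" "absv r n = s" using MI_scalev absv_scalev j n_def by auto
  have "addv n (\<ee> j) = scalev (Suc s) (\<ee> j)"
    unfolding n_def by (intro ext) (simp add: addv_unitv_apply scalev_unitv_apply)
  then have nn: "pCons 0 (P n) = P (scalev (Suc s) (\<ee> j)) + smult (b n j) (P n) + smult (a n j) R"
    using NN_rec_poly[OF n(1) j] nn_tail_axis[OF j] n_def R_def by simp
  have "pCons 0 (P n) = P (scalev (Suc s) (\<ee> j)) + smult (B s) (P n) + smult (A s) R"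
    using TT_rec_poly[OF tt, of s] OP_eq_MOP_axis[OF j] n_def R_def by simp
  then have diff: "smult (b n j - B s) (P n) + smult (a n j - A s) R = 0"
    using nn by (simp add: smult_diff_left algebra_simps)
  have R: "coeff R (degree (P n)) = 0" "s \<noteq> 0 \<Longrightarrow> R \<noteq> 0"
  proof -
    have "degree (OP (\<mu> j) (s - 1)) = s - 1" "OP (\<mu> j) (s - 1) \<noteq> 0"
      using degree_MOP[OF MI_scalev[OF j]] MOP_nonzero[OF MI_scalev[OF j]]
      unfolding OP_eq_MOP_axis[OF j] absv_scalev[OF j] by auto
    then show "coeff R (degree (P n)) = 0" "s \<noteq> 0 \<Longrightarrow> R \<noteq> 0"
      using degree_MOP[OF n(1)] n(2) unfolding R_def by (auto simp: coeff_eq_0)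
  qed
  show "b n j = B s" using smult_combination_eq_0(1)[OF diff R(1)] lead_coeff_MOP[OF n(1)] by simp
  show "a n j = (if s = 0 then 0 else A s)"
    using smult_combination_eq_0(2)[OF diff R(1)] R(2) a_eq_0[OF n(1) j] n_def
    by (auto simp: scalev_unitv_apply)
qed

lemma relations_bc_NN:
  assumes "\<forall>i\<in>{1..r}. TT_rec (\<mu> i) (a2\<mu> i) (b\<mu> i)"
  shows "relations_bc r a2\<mu> b\<mu> a b"
  unfolding relations_bc_def
proof (intro conjI ballI allI impI)
  fix m j assume "j \<in> {1..r}"
  then show "a (scalev m (\<ee> j)) j = (if m = 0 then 0 else a2\<mu> j m)"
    and "b (scalev m (\<ee> j)) j = b\<mu> j m"
    using NN_boundary assms by blast+
next
  fix m i j assume "i \<in> {1..r}" "j \<in> {1..r}" "i \<noteq> j"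
  then show "a (scalev m (\<ee> i)) j = 0"
    using a_eq_0[OF MI_scalev] by (simp add: scalev_unitv_apply)
qed (use NN_relation_b NN_relation_a_sum NN_relation_a_ratio in blast)+

end

theorem theorem3p3:
  fixes r :: nat and \<mu> :: "nat \<Rightarrow> real measure"
    and a b :: "(nat \<Rightarrow> nat) \<Rightarrow> nat \<Rightarrow> real"
    and a2\<mu> b\<mu> :: "nat \<Rightarrow> nat \<Rightarrow> real"
  assumes "r \<ge> 2"
    and "\<forall>i\<in>{1..r}. moment_measure (\<mu> i)"
    and "normal_system r \<mu>"
    and "NN_rec r \<mu> a b"
    and "\<forall>i\<in>{1..r}. TT_rec (\<mu> i) (a2\<mu> i) (b\<mu> i)"
    and "\<forall>n\<in>MI r. \<forall>i\<in>{1..r}. \<forall>j\<in>{1..r}. i \<noteq> j \<longrightarrow> b n i \<noteq> b n j"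
  shows "\<forall>a' b'. (\<forall>n\<in>MI r. \<forall>j\<in>{1..r}. n j = 0 \<longrightarrow> a' n j = 0) \<and> relations_bc r a2\<mu> b\<mu> a' b'
           \<longrightarrow> (\<forall>n\<in>MI r. \<forall>j\<in>{1..r}. a' n j = a n j \<and> b' n j = b n j)"
proof (intro allI impI ballI)
  interpret NN_system r \<mu> a b
    using assms(2-4) by unfold_locales auto
  fix a' b' n j
  assume "(\<forall>n\<in>MI r. \<forall>j\<in>{1..r}. n j = 0 \<longrightarrow> a' n j = 0) \<and> relations_bc r a2\<mu> b\<mu> a' b'"
    and "n \<in> MI r" "j \<in> {1..r}"
  then show "a' n j = a n j \<and> b' n j = b n j"
    using relations_bc_unique[OF relations_bc_NN[OF assms(5)] _ assms(6)] a_eq_0 by blast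
qed

end
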